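(* Let $I\subseteq\mathbb{K}[x_1,\dots,x_d]$ be a pure difference ideal. (1) Suppose $I=\langle p\rangle$ where $p$ is a canonical pure difference binomial, and let $L\subseteq\mathbb{Z}^d$ be the lattice spanned by the exponent vector of $p$. Then $I=I_L$; if moreover $p$ is irreducible, then $I=I_{\operatorname{Sat}(L)}$. (2) Suppose $I=\langle p_1,\dots,p_k\rangle$ with $p_1,\dots,p_k$ pure difference binomials with exponent vectors $\bm{v}_1,\dots,\bm{v}_k$, at least one of which lies in $\mathbb{Z}_{>0}^d$. Let $J$ be the ideal generated by the canonical binomials of $\bm{v}_1,\dots,\bm{v}_k$ and $L$ the lattice spanned by $\bm{v}_1,\dots,\bm{v}_k$. Then $J=I_L$.
   Context: $\mathbb{K}=\overline{\mathbb{Q}}$. A pure difference binomial is $\bm{x}^{\bm{\alpha}}-\bm{x}^{\bm{\beta}}$ with $\bm{\alpha},\bm{\beta}\in\mathbb{N}^d$; its exponent vector is $\bm{\alpha}-\bm{\beta}$; a pure difference ideal is an ideal generated by pure difference binomials. For $\bm{v}\in\mathbb{Z}^d$, with $\bm{v}_+=(\max\{v_1,0\},\dots,\max\{v_d,0\})$ and $\bm{v}_-=\bm{v}_+-\bm{v}$, the canonical binomial of $\bm{v}$ is $\bm{x}^{\bm{v}_+}-\bm{x}^{\bm{v}_-}$; a canonical pure difference binomial is the canonical binomial of some vector. For a lattice $L\subseteq\mathbb{Z}^d$, $I_L=\langle \bm{x}^{\bm{\alpha}}-\bm{x}^{\bm{\beta}} : \bm{\alpha},\bm{\beta}\in\mathbb{N}^d,\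 \bm{\alpha}-\bm{\beta}\in L\rangle$ and $\operatorname{Sat}(L)=\{\bm{u}\in\mathbb{Z}^d : c\bm{u}\in L\text{ for some } c\in\mathbb{Z}\setminus\{0\}\}$. *)

theory Defs
  imports "HOL-Algebra.Algebraic_Closure_Type" "HOL-Library.Poly_Mapping"
begin

type_synonym K = "rat alg_closure"

text \<open>Polynomial ring K[x_i : i in 'n], where 'n is a finite type with d = CARD('n) elements.
  A polynomial is a finitely supported map from monomials (exponent vectors 'n =>0 nat) to K.\<close>
type_synonym 'n mpoly = "('n \<Rightarrow>\<^sub>0 nat) \<Rightarrow>\<^sub>0 K"

definition monom :: "('n::finite \<Rightarrow> nat) \<Rightarrow> 'n mpoly" where
  "monom \<alpha> = Poly_Mapping.single (Abs_poly_mapping \<alpha>) 1"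

definition gen_ideal :: "'a::comm_ring_1 set \<Rightarrow> 'a set" where
  "gen_ideal S = {x. \<exists>F c. finite F \<and> F \<subseteq> S \<and> x = (\<Sum>f\<in>F. c f * f)}"

definition expvec :: "('n \<Rightarrow> nat) \<Rightarrow> ('n \<Rightarrow> nat) \<Rightarrow> ('n \<Rightarrow> int)" where
  "expvec \<alpha> \<beta> = (\<lambda>i. int (\<alpha> i) - int (\<beta> i))"

definition pos_part :: "('n \<Rightarrow> int) \<Rightarrow> ('n \<Rightarrow> nat)" where
  "pos_part v = (\<lambda>i. nat (max (v i) 0))"

definition neg_part :: "('n \<Rightarrow> int) \<Rightarrow> ('n \<Rightarrow> nat)" where
  "neg_part v = (\<lambda>i. nat (max (v i) 0 - v i))"

definition canon_binomial :: "('n::finite \<Rightarrow> int) \<Rightarrow> 'n mpoly" where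
  "canon_binomial v = monom (pos_part v) - monom (neg_part v)"

definition lattice_ideal :: "('n::finite \<Rightarrow> int) set \<Rightarrow> 'n mpoly set" where
  "lattice_ideal L = gen_ideal {monom \<alpha> - monom \<beta> | \<alpha> \<beta>. expvec \<alpha> \<beta> \<in> L}"

definition Sat :: "('n \<Rightarrow> int) set \<Rightarrow> ('n \<Rightarrow> int) set" where
  "Sat L = {u. \<exists>c::int. c \<noteq> 0 \<and> (\<lambda>i. c * u i) \<in> L}"

definition lattice_span :: "nat \<Rightarrow> (nat \<Rightarrow> ('n \<Rightarrow> int)) \<Rightarrow> ('n \<Rightarrow> int) set" where
  "lattice_span k v = {w. \<exists>c::nat \<Rightarrow> int. w = (\<lambda>j. \<Sum>i<k. c i * v i j)}"

end

theory Submission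
  imports Defs
begin

text \<open>
  A binomial \<open>x^\<alpha> - x^\<beta>\<close> with \<open>\<alpha> - \<beta> = c v\<close>, \<open>c \<ge> 0\<close>, is a monomial times
  \<open>X^c - Y^c\<close>, where \<open>X - Y\<close> is the canonical binomial of \<open>v\<close>; so every binomial of the
  lattice spanned by \<open>v\<close> is a multiple of it, which gives the first claim of (1).
  If the canonical binomial is irreducible then \<open>v\<close> is primitive, and the span of a primitive
  vector is saturated: for \<open>v = n w\<close> with \<open>n \<ge> 2\<close> it factors as \<open>(X - Y) S\<close>, and neither factor
  is a unit because \<open>X - Y\<close> vanishes at \<open>(1, \<dots>, 1)\<close> while \<open>S\<close> vanishes at a point of \<open>K\<close>
  where \<open>X / Y\<close> is a nontrivial \<open>n\<close>-th root of unity.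

  For (2), the vectors \<open>u\<close> all of whose binomials lie in \<open>J\<close> include the multiples of each
  \<open>v\<^sub>i\<close>, and they are closed under addition thanks to the positive generator \<open>P\<close>: to write
  \<open>x^a - x^b\<close> with \<open>a - b = u + u'\<close>, shift \<open>a\<close> and \<open>b\<close> by a large multiple of \<open>P\<close>, which
  makes room for a monomial \<open>x^m\<close> with \<open>a' - m = u\<close> and \<open>m - b' = u'\<close>; the two shifts are
  themselves binomials of a multiple of \<open>P\<close>.
\<close>

lemma gen_ideal_0: "0 \<in> gen_ideal S"
  unfolding gen_ideal_def by (auto intro!: exI[of _ "{}"])

lemma gen_ideal_base: "x \<in> S \<Longrightarrow> x \<in> gen_ideal S"
  unfolding gen_ideal_def by (auto intro!: exI[of _ "{x}"] exI[of _ "\<lambda>_. 1"])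

lemma gen_ideal_mult: "x \<in> gen_ideal S \<Longrightarrow> r * x \<in> gen_ideal S"
  unfolding gen_ideal_def
  by (auto simp: sum_distrib_left mult.assoc intro!: exI[of _ "\<lambda>f. r * _ f"])

lemma gen_ideal_add:
  assumes "x \<in> gen_ideal S" "y \<in> gen_ideal S"
  shows "x + y \<in> gen_ideal S"
proof -
  obtain F c G d where F: "finite F" "F \<subseteq> S" "x = (\<Sum>f\<in>F. c f * f)"
    and G: "finite G" "G \<subseteq> S" "y = (\<Sum>f\<in>G. d f * f)"
    using assms unfolding gen_ideal_def by blast
  define c' where "c' f = (if f \<in> F then c f else 0)" for f
  define d' where "d' f = (if f \<in> G then d f else 0)" for f
  have "x = (\<Sum>f\<in>F \<union> G. c' f * f)"
    unfolding F(3) by (rule sum.mono_neutral_cong_left) (simp_all add: F(1) G(1) c'_def)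
  moreover have "y = (\<Sum>f\<in>F \<union> G. d' f * f)"
    unfolding G(3) by (rule sum.mono_neutral_cong_left) (simp_all add: F(1) G(1) d'_def)
  ultimately have "x + y = (\<Sum>f\<in>F \<union> G. (c' f + d' f) * f)"
    by (simp add: distrib_right sum.distrib)
  with F G show ?thesis
    unfolding gen_ideal_def by (intro CollectI exI[of _ "F \<union> G"] exI[of _ "\<lambda>f. c' f + d' f"]) auto
qed

lemma gen_ideal_uminus: "x \<in> gen_ideal S \<Longrightarrow> - x \<in> gen_ideal S"
  using gen_ideal_mult[of x S "- 1"] by simp

lemma gen_ideal_diff: "x \<in> gen_ideal S \<Longrightarrow> y \<in> gen_ideal S \<Longrightarrow> x - y \<in> gen_ideal S"
  by (metis diff_conv_add_uminus gen_ideal_add gen_ideal_uminus)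

lemma gen_ideal_sum: "(\<And>i. i \<in> A \<Longrightarrow> g i \<in> gen_ideal S) \<Longrightarrow> sum g A \<in> gen_ideal S"
  by (induction A rule: infinite_finite_induct) (simp_all add: gen_ideal_0 gen_ideal_add)

lemma gen_ideal_subset: "S \<subseteq> gen_ideal T \<Longrightarrow> gen_ideal S \<subseteq> gen_ideal T"
  unfolding gen_ideal_def[of S] by (auto intro!: gen_ideal_sum gen_ideal_mult)

lemma gen_ideal_eqI: "S \<subseteq> gen_ideal T \<Longrightarrow> T \<subseteq> gen_ideal S \<Longrightarrow> gen_ideal S = gen_ideal T"
  by (simp add: gen_ideal_subset subset_antisym)

lemma lookup_Abs_poly_mapping_finite [simp]:
  "Poly_Mapping.lookup (Abs_poly_mapping (a :: 'n::finite \<Rightarrow> nat)) = a"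
  by (rule lookup_Abs_poly_mapping) simp

lemma monom_add: "monom (\<lambda>i. a i + b i) = monom a * monom b"
proof -
  have "Abs_poly_mapping (\<lambda>i. a i + b i) = Abs_poly_mapping a + Abs_poly_mapping b"
    by (rule poly_mapping_eqI) (simp add: lookup_add)
  then show ?thesis by (simp add: monom_def mult_single)
qed

lemma monom_0: "monom (\<lambda>_. 0) = 1"
  by (simp add: monom_def)

lemma monom_power: "monom (\<lambda>i. n * a i) = monom a ^ n"
  by (induction n) (simp_all add: monom_0 monom_add)

lemma expvec_pos_neg_part: "expvec (pos_part w) (neg_part w) = w"
  by (auto simp: expvec_def pos_part_def neg_part_def)

lemma expvec_swap: "expvec \<beta> \<alpha> = (\<lambda>j. - expvec \<alpha> \<beta> j)"
  by (simp add: expvec_def)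

lemma expvec_eq_shift:
  assumes "expvec \<alpha> \<beta> = w"
  shows "\<exists>\<epsilon>. \<alpha> = (\<lambda>i. pos_part w i + \<epsilon> i) \<and> \<beta> = (\<lambda>i. neg_part w i + \<epsilon> i)"
proof (intro exI conjI ext)
  fix i
  have "w i = int (\<alpha> i) - int (\<beta> i)"
    using assms by (auto simp: expvec_def)
  then show "\<alpha> i = pos_part w i + (\<alpha> i - pos_part w i)" "\<beta> i = neg_part w i + (\<alpha> i - pos_part w i)"
    by (auto simp: pos_part_def neg_part_def)
qed

lemma pos_part_mult: "pos_part (\<lambda>j. int n * w j) = (\<lambda>i. n * pos_part w i)"
  by (auto simp: pos_part_def max_def nat_mult_distrib mult_le_0_iff)

lemma neg_part_mult: "neg_part (\<lambda>j. int n * w j) = (\<lambda>i. n * neg_part w i)"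
  by (auto simp: neg_part_def max_def mult_le_0_iff nat_mult_distrib simp flip: mult_minus_right)

definition binomials :: "('n::finite \<Rightarrow> int) \<Rightarrow> 'n mpoly set" where
  "binomials u = {monom \<alpha> - monom \<beta> | \<alpha> \<beta>. expvec \<alpha> \<beta> = u}"

lemma lattice_ideal_eq_gen_ideal_binomials: "lattice_ideal L = gen_ideal (\<Union>u\<in>L. binomials u)"
  unfolding lattice_ideal_def binomials_def by (rule arg_cong[of _ _ gen_ideal]) blast

lemma canon_binomial_in_binomials: "canon_binomial w \<in> binomials w"
  unfolding binomials_def canon_binomial_def using expvec_pos_neg_part by blast

lemma canon_binomial_multiple_factor:
  "canon_binomial (\<lambda>i. int n * w i) =
     canon_binomial w * (\<Sum>i<n. monom (neg_part w) ^ (n - Suc i) * monom (pos_part w) ^ i)"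
  unfolding canon_binomial_def pos_part_mult neg_part_mult monom_power by (rule power_diff_sumr2)

lemma canon_binomial_dvd_power_binomial:
  assumes "expvec \<alpha> \<beta> = (\<lambda>j. int n * w j)"
  shows "canon_binomial w dvd monom \<alpha> - monom \<beta>"
proof -
  obtain \<epsilon> where "\<alpha> = (\<lambda>i. pos_part (\<lambda>j. int n * w j) i + \<epsilon> i)"
    and "\<beta> = (\<lambda>i. neg_part (\<lambda>j. int n * w j) i + \<epsilon> i)"
    using expvec_eq_shift[OF assms] by blast
  then have "monom \<alpha> - monom \<beta> = canon_binomial (\<lambda>j. int n * w j) * monom \<epsilon>"
    by (simp add: canon_binomial_def monom_add left_diff_distrib)
  also have "\<dots> = canon_binomial w *
      ((\<Sum>i<n. monom (neg_part w) ^ (n - Suc i) * monom (pos_part w) ^ i) * monom \<epsilon>)"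
    by (simp only: canon_binomial_multiple_factor mult.assoc)
  finally show ?thesis
    by (rule dvdI)
qed

lemma canon_binomial_dvd_binomial:
  assumes "p \<in> binomials (\<lambda>j. c * w j)"
  shows "canon_binomial w dvd p"
proof -
  obtain \<alpha> \<beta> where p: "p = monom \<alpha> - monom \<beta>" and e: "expvec \<alpha> \<beta> = (\<lambda>j. c * w j)"
    using assms unfolding binomials_def by blast
  show ?thesis
  proof (cases "c \<ge> 0")
    case True
    then have "expvec \<alpha> \<beta> = (\<lambda>j. int (nat c) * w j)"
      using e by simp
    then show ?thesis
      unfolding p by (rule canon_binomial_dvd_power_binomial)
  next
    case False
    then have "expvec \<beta> \<alpha> = (\<lambda>j. int (nat (- c)) * w j)"
      using e by (simp add: expvec_swap[of \<beta> \<alpha>])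
    then have "canon_binomial w dvd monom \<beta> - monom \<alpha>"
      by (rule canon_binomial_dvd_power_binomial)
    then show ?thesis
      using dvd_minus_iff[of "canon_binomial w" "monom \<beta> - monom \<alpha>"] unfolding p by simp
  qed
qed

lemma binomials_multiple_subset:
  assumes "canon_binomial w \<in> gen_ideal S"
  shows "binomials (\<lambda>j. c * w j) \<subseteq> gen_ideal S"
proof
  fix p assume "p \<in> binomials (\<lambda>j. c * w j)"
  then obtain r where "p = canon_binomial w * r"
    using canon_binomial_dvd_binomial by (blast elim: dvdE)
  then show "p \<in> gen_ideal S"
    using gen_ideal_mult[OF assms, of r] by (simp add: mult.commute)
qed

lemma gen_ideal_eq_lattice_ideal:
  assumes "\<And>g. g \<in> G \<Longrightarrow> \<exists>u\<in>L. g \<in> binomials u"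
    and "\<And>u. u \<in> L \<Longrightarrow> binomials u \<subseteq> gen_ideal G"
  shows "gen_ideal G = lattice_ideal L"
  unfolding lattice_ideal_eq_gen_ideal_binomials
proof (rule gen_ideal_eqI)
  show "G \<subseteq> gen_ideal (\<Union>u\<in>L. binomials u)"
    using assms(1) by (blast intro: gen_ideal_base)
  show "(\<Union>u\<in>L. binomials u) \<subseteq> gen_ideal G"
    using assms(2) by blast
qed

lemma lattice_span_1: "lattice_span 1 (\<lambda>_. v) = range (\<lambda>c j. c * v j)"
proof (intro equalityI subsetI)
  fix w assume "w \<in> lattice_span 1 (\<lambda>_. v)"
  then show "w \<in> range (\<lambda>c j. c * v j)"
    unfolding lattice_span_def by auto
next
  fix w assume "w \<in> range (\<lambda>c j. c * v j)"
  then obtain c where "w = (\<lambda>j. c * v j)"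
    by blast
  then show "w \<in> lattice_span 1 (\<lambda>_. v)"
    unfolding lattice_span_def by (intro CollectI exI[of _ "\<lambda>_. c"]) simp
qed

lemma generator_in_lattice_span:
  assumes "i < k"
  shows "v i \<in> lattice_span k v"
proof -
  have "v i = (\<lambda>j. \<Sum>i'<k. of_bool (i' = i) * v i' j)"
    using assms by simp
  then show ?thesis
    unfolding lattice_span_def by (intro CollectI exI[of _ "\<lambda>i'. of_bool (i' = i)"])
qed

theorem gen_ideal_canon_binomial:
  "gen_ideal {canon_binomial v} = lattice_ideal (lattice_span 1 (\<lambda>_. v))"
proof (rule gen_ideal_eq_lattice_ideal)
  show "\<exists>u\<in>lattice_span 1 (\<lambda>_. v). g \<in> binomials u" if "g \<in> {canon_binomial v}" for g
    using that canon_binomial_in_binomials generator_in_lattice_span[of 0 1 "\<lambda>_. v"] by auto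
  show "binomials u \<subseteq> gen_ideal {canon_binomial v}" if u: "u \<in> lattice_span 1 (\<lambda>_. v)" for u
  proof -
    obtain c where "u = (\<lambda>j. c * v j)"
      using u unfolding lattice_span_1 by blast
    then show ?thesis
      using binomials_multiple_subset[OF gen_ideal_base[of _ "{canon_binomial v}"]] by simp
  qed
qed

definition eval_mpoly :: "('n::finite \<Rightarrow> 'a::comm_semiring_1) \<Rightarrow> (('n \<Rightarrow>\<^sub>0 nat) \<Rightarrow>\<^sub>0 'a) \<Rightarrow> 'a" where
  "eval_mpoly a f =
     (\<Sum>m\<in>Poly_Mapping.keys f. Poly_Mapping.lookup f m * (\<Prod>i\<in>UNIV. a i ^ Poly_Mapping.lookup m i))"

lemma eval_mpoly_superset:
  "finite A \<Longrightarrow> Poly_Mapping.keys f \<subseteq> A \<Longrightarrow>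
   eval_mpoly a f = (\<Sum>m\<in>A. Poly_Mapping.lookup f m * (\<Prod>i\<in>UNIV. a i ^ Poly_Mapping.lookup m i))"
  unfolding eval_mpoly_def by (rule sum.mono_neutral_left) (auto simp: in_keys_iff)

lemma eval_mpoly_add: "eval_mpoly a (f + g) = eval_mpoly a f + eval_mpoly a g"
proof -
  let ?A = "Poly_Mapping.keys f \<union> Poly_Mapping.keys g"
  have "Poly_Mapping.keys (f + g) \<subseteq> ?A"
    by (rule keys_add)
  then show ?thesis
    by (simp add: eval_mpoly_superset[of ?A] lookup_add distrib_right sum.distrib)
qed

lemma eval_mpoly_single:
  "eval_mpoly a (Poly_Mapping.single m c) = c * (\<Prod>i\<in>UNIV. a i ^ Poly_Mapping.lookup m i)"
  by (simp add: eval_mpoly_def)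

lemma eval_mpoly_0: "eval_mpoly a 0 = 0"
  by (simp add: eval_mpoly_def)

lemma eval_mpoly_sum: "eval_mpoly a (sum g F) = (\<Sum>x\<in>F. eval_mpoly a (g x))"
  by (induction F rule: infinite_finite_induct) (simp_all add: eval_mpoly_0 eval_mpoly_add)

lemma poly_mapping_sum_single:
  "f = (\<Sum>m\<in>Poly_Mapping.keys f. Poly_Mapping.single m (Poly_Mapping.lookup f m))"
  by (rule poly_mapping_eqI) (simp add: lookup_sum lookup_single when_def in_keys_iff)

lemma eval_mpoly_mult: "eval_mpoly a (f * g) = eval_mpoly a f * eval_mpoly a g"
proof -
  let ?ev = "\<lambda>m. \<Prod>i\<in>UNIV. a i ^ Poly_Mapping.lookup m i"
  have "f * g = (\<Sum>m\<in>Poly_Mapping.keys f. \<Sum>n\<in>Poly_Mapping.keys g.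
      Poly_Mapping.single (m + n) (Poly_Mapping.lookup f m * Poly_Mapping.lookup g n))"
    by (subst (1 2) poly_mapping_sum_single) (simp add: sum_product mult_single)
  moreover have "?ev (m + n) = ?ev m * ?ev n" for m n
    by (simp add: lookup_add power_add prod.distrib)
  ultimately have "eval_mpoly a (f * g) = (\<Sum>m\<in>Poly_Mapping.keys f. \<Sum>n\<in>Poly_Mapping.keys g.
      (Poly_Mapping.lookup f m * ?ev m) * (Poly_Mapping.lookup g n * ?ev n))"
    by (simp add: eval_mpoly_sum eval_mpoly_single mult_ac)
  then show ?thesis
    by (simp add: eval_mpoly_def sum_product)
qed

lemma eval_mpoly_1: "eval_mpoly a 1 = 1"
  using eval_mpoly_single[of a 0 1] by simp

lemma eval_mpoly_power: "eval_mpoly a (f ^ n) = eval_mpoly a f ^ n"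
  by (induction n) (simp_all add: eval_mpoly_1 eval_mpoly_mult)

lemma eval_mpoly_diff:
  fixes f g :: "('n::finite \<Rightarrow>\<^sub>0 nat) \<Rightarrow>\<^sub>0 'a::comm_ring_1"
  shows "eval_mpoly a (f - g) = eval_mpoly a f - eval_mpoly a g"
  using eval_mpoly_add[of a "f - g" g] by simp

lemma eval_mpoly_unit_neq_0:
  assumes "f dvd 1"
  shows "eval_mpoly a f \<noteq> 0"
proof
  assume "eval_mpoly a f = 0"
  obtain g where "f * g = 1"
    using assms by (auto elim: dvdE)
  then have "eval_mpoly a f * eval_mpoly a g = 1"
    by (metis eval_mpoly_mult eval_mpoly_1)
  then show False
    using \<open>eval_mpoly a f = 0\<close> by simp
qed

lemma eval_mpoly_monom: "eval_mpoly a (monom \<alpha>) = (\<Prod>i\<in>UNIV. a i ^ \<alpha> i)"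
  by (simp add: monom_def eval_mpoly_single)

lemma prod_power_delta:
  "(\<Prod>i\<in>UNIV. (if i = i0 then t else 1) ^ \<alpha> i) = (t :: 'a::comm_monoid_mult) ^ \<alpha> (i0 :: 'n::finite)"
proof -
  have "(\<Prod>i\<in>UNIV. (if i = i0 then t else 1) ^ \<alpha> i) = (\<Prod>i\<in>UNIV. if i = i0 then t ^ \<alpha> i else 1)"
    by (rule prod.cong) simp_all
  then show ?thesis
    by simp
qed

lemma exists_nontrivial_root_of_unity:
  assumes "n \<ge> 2"
  shows "\<exists>z :: 'a::{alg_closed_field, field_char_0}. z \<noteq> 1 \<and> z ^ n = 1"
proof -
  obtain z :: 'a where "(\<Sum>k\<le>n - 1. 1 * z ^ k) = 0"
    using alg_closed[of "n - 1" "\<lambda>_. 1"] assms by auto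
  moreover have "{..n - 1} = {..<n}"
    using assms by auto
  ultimately have z: "(\<Sum>k<n. z ^ k) = 0"
    by simp
  have "z ^ n - 1 = (z - 1) * (\<Sum>k<n. z ^ k)"
    by (rule power_diff_1_eq)
  then have "z ^ n = 1"
    using z by simp
  moreover have "z \<noteq> 1"
    using z assms by auto
  ultimately show ?thesis
    by blast
qed

lemma canon_binomial_not_unit: "\<not> canon_binomial w dvd 1"
proof
  assume "canon_binomial w dvd 1"
  then have "eval_mpoly (\<lambda>_. 1) (canon_binomial w) \<noteq> 0"
    by (rule eval_mpoly_unit_neq_0)
  then show False
    by (simp add: canon_binomial_def eval_mpoly_diff eval_mpoly_monom)
qed

lemma geometric_cofactor_not_unit:
  assumes n: "n \<ge> 2" and w: "w i0 \<noteq> 0"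
  shows "\<not> (\<Sum>i<n. monom (neg_part w) ^ (n - Suc i) * monom (pos_part w) ^ i) dvd 1"
    (is "\<not> ?S dvd 1")
proof
  assume "?S dvd 1"
  obtain z :: K where z: "z \<noteq> 1" "z ^ n = 1"
    using exists_nontrivial_root_of_unity[OF n] by blast
  obtain t :: K where t: "t ^ nat \<bar>w i0\<bar> = z"
    using nth_root_exists[of "nat \<bar>w i0\<bar>" z] w by auto
  let ?ev = "eval_mpoly (\<lambda>i. if i = i0 then t else 1)"
  let ?Xp = "monom (pos_part w)" and ?Xn = "monom (neg_part w)"
  have "?ev ?Xp = t ^ pos_part w i0" "?ev ?Xn = t ^ neg_part w i0"
    by (simp_all add: eval_mpoly_monom prod_power_delta)
  then have monomial_values: "?ev ?Xp = z \<and> ?ev ?Xn = 1 \<or> ?ev ?Xp = 1 \<and> ?ev ?Xn = z"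
    using w t by (cases "w i0 > 0") (auto simp: pos_part_def neg_part_def)
  have "(?ev ?Xp - ?ev ?Xn) * ?ev ?S = ?ev (?Xp ^ n - ?Xn ^ n)"
    by (simp only: power_diff_sumr2 eval_mpoly_mult eval_mpoly_diff)
  also have "\<dots> = ?ev ?Xp ^ n - ?ev ?Xn ^ n"
    by (simp add: eval_mpoly_diff eval_mpoly_power)
  also have "\<dots> = 0"
    using monomial_values z by auto
  finally have "(?ev ?Xp - ?ev ?Xn) * ?ev ?S = 0" .
  moreover have "?ev ?Xp - ?ev ?Xn \<noteq> 0"
    using monomial_values z by auto
  moreover have "?ev ?S \<noteq> 0"
    using \<open>?S dvd 1\<close> by (rule eval_mpoly_unit_neq_0)
  ultimately show False
    by simp
qed

lemma not_irreducible_canon_binomial_multiple: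
  assumes "n \<ge> 2" and "w i0 \<noteq> 0"
  shows "\<not> irreducible (canon_binomial (\<lambda>i. int n * w i))"
  using irreducibleD[OF _ canon_binomial_multiple_factor] canon_binomial_not_unit
    geometric_cofactor_not_unit[of n w i0] assms by blast

lemma proportional_int_vectors:
  fixes u v :: "'n \<Rightarrow> int"
  assumes "c \<noteq> 0" and cuv: "\<And>i. c * u i = m * v i"
  obtains d e w where "d \<noteq> 0" "\<And>i. v i = d * w i" "\<And>i. u i = e * w i"
proof -
  define g where "g = gcd c m"
  define d where "d = c div g"
  define e where "e = m div g"
  have "g \<noteq> 0" "c = d * g" "m = e * g"
    using \<open>c \<noteq> 0\<close> by (simp_all add: g_def d_def e_def)
  then have "d \<noteq> 0"
    using \<open>c \<noteq> 0\<close> by auto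
  have "coprime d e"
    using \<open>c \<noteq> 0\<close> unfolding d_def e_def g_def by (simp add: div_gcd_coprime)
  have due: "d * u i = e * v i" for i
  proof -
    have "g * (d * u i) = g * (e * v i)"
      using cuv[of i] \<open>c = d * g\<close> \<open>m = e * g\<close> by (simp add: mult_ac)
    then show ?thesis
      using \<open>g \<noteq> 0\<close> by simp
  qed
  define w where "w i = v i div d" for i
  have vw: "v i = d * w i" for i
  proof -
    have "d dvd e * v i"
      using due[of i] by (metis dvd_triv_left)
    then have "d dvd v i"
      using \<open>coprime d e\<close> by (simp add: coprime_dvd_mult_right_iff)
    then show ?thesis
      by (simp add: w_def)
  qed
  have "u i = e * w i" for i
  proof -
    have "d * u i = d * (e * w i)"
      using due[of i] vw[of i] by (simp add: mult_ac)
    then show ?thesis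
      using \<open>d \<noteq> 0\<close> by simp
  qed
  with \<open>d \<noteq> 0\<close> vw show ?thesis
    by (rule that)
qed

lemma Sat_lattice_span_1:
  assumes primitive: "\<And>n w. v = (\<lambda>i. int n * w i) \<Longrightarrow> n < 2"
  shows "Sat (lattice_span 1 (\<lambda>_. v)) = lattice_span 1 (\<lambda>_. v)"
proof
  show "lattice_span 1 (\<lambda>_. v) \<subseteq> Sat (lattice_span 1 (\<lambda>_. v))"
    unfolding Sat_def by (auto intro: exI[of _ 1])
  show "Sat (lattice_span 1 (\<lambda>_. v)) \<subseteq> lattice_span 1 (\<lambda>_. v)"
  proof
    fix u assume "u \<in> Sat (lattice_span 1 (\<lambda>_. v))"
    then obtain c m where "c \<noteq> 0" and "\<forall>i. c * u i = m * v i"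
      unfolding Sat_def lattice_span_1 by (auto simp: fun_eq_iff)
    then obtain d e w where "d \<noteq> 0" and vw: "\<And>i. v i = d * w i" and uw: "\<And>i. u i = e * w i"
      by (metis proportional_int_vectors)
    have "v = (\<lambda>i. int (nat \<bar>d\<bar>) * (sgn d * w i))"
      by (auto simp: vw abs_mult_sgn mult.assoc[symmetric])
    then have "nat \<bar>d\<bar> < 2"
      by (rule primitive)
    then have "\<bar>d\<bar> = 1"
      using \<open>d \<noteq> 0\<close> by linarith
    then have "d * d = 1"
      using abs_mult_self_eq[of d] by simp
    then have "u i = (e * d) * v i" for i
      by (simp add: uw vw mult.assoc[symmetric] mult.commute[of e d] mult.assoc)
    then show "u \<in> lattice_span 1 (\<lambda>_. v)"
      unfolding lattice_span_1 by blast
  qed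
qed

theorem gen_ideal_irreducible_canon_binomial:
  assumes irr: "irreducible (canon_binomial v)"
  shows "gen_ideal {canon_binomial v} = lattice_ideal (Sat (lattice_span 1 (\<lambda>_. v)))"
proof -
  have "n < 2" if v: "v = (\<lambda>i. int n * w i)" for n w
  proof (rule ccontr)
    assume "\<not> n < 2"
    have "w \<noteq> (\<lambda>_. 0)"
    proof
      assume "w = (\<lambda>_. 0)"
      then have "canon_binomial v = 0"
        using v by (simp add: canon_binomial_def pos_part_def neg_part_def)
      with irr show False
        by simp
    qed
    then obtain i0 where "w i0 \<noteq> 0"
      by auto
    with \<open>\<not> n < 2\<close> have "\<not> irreducible (canon_binomial v)"
      unfolding v by (intro not_irreducible_canon_binomial_multiple) simp_all
    with irr show False
      by contradiction
  qed
  then have "Sat (lattice_span 1 (\<lambda>_. v)) = lattice_span 1 (\<lambda>_. v)"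
    by (rule Sat_lattice_span_1)
  then show ?thesis
    by (simp only: gen_ideal_canon_binomial)
qed

lemma binomial_in_binomials: "expvec \<alpha> \<beta> = u \<Longrightarrow> monom \<alpha> - monom \<beta> \<in> binomials u"
  unfolding binomials_def by blast

lemma expvec_split_by_shift:
  fixes a b :: "'n::finite \<Rightarrow> nat"
  assumes P: "\<And>j. P j > 0" and ab: "expvec a b = (\<lambda>j. u j + u' j)"
  obtains N a' b' m where "expvec a' a = (\<lambda>j. int N * P j)" "expvec b' b = (\<lambda>j. int N * P j)"
    "expvec a' m = u" "expvec m b' = u'"
proof -
  define N where "N = (\<Sum>j\<in>UNIV. nat \<bar>u j\<bar>)"
  have N: "\<bar>u j\<bar> \<le> int N * P j" for j
  proof -
    have "nat \<bar>u j\<bar> \<le> N"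
      unfolding N_def by (rule member_le_sum) auto
    moreover have "int N \<le> int N * P j"
      using P[of j] by (simp add: mult_le_cancel_left1)
    ultimately show ?thesis
      by linarith
  qed
  define a' where "a' j = a j + N * nat (P j)" for j
  define b' where "b' j = b j + N * nat (P j)" for j
  define m where "m j = nat (int (a' j) - u j)" for j
  have a'_int: "int (a' j) = int (a j) + int N * P j" for j
    using P[of j] by (simp add: a'_def)
  have b'_int: "int (b' j) = int (b j) + int N * P j" for j
    using P[of j] by (simp add: b'_def)
  have m_int: "int (m j) = int (a' j) - u j" for j
    using N[of j] a'_int[of j] by (simp add: m_def)
  have "expvec m b' = u'"
  proof
    fix j
    have "int (a j) - int (b j) = u j + u' j"
      using ab by (simp add: expvec_def fun_eq_iff)
    then show "expvec m b' j = u' j"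
      by (simp add: expvec_def m_int a'_int b'_int)
  qed
  moreover have "expvec a' a = (\<lambda>j. int N * P j)" "expvec b' b = (\<lambda>j. int N * P j)"
    "expvec a' m = u"
    by (simp_all add: expvec_def a'_int b'_int m_int)
  ultimately show ?thesis
    using that by blast
qed

lemma binomials_add_subset:
  assumes P: "\<And>j. P j > 0" and "canon_binomial P \<in> gen_ideal S"
    and u: "binomials u \<subseteq> gen_ideal S" and u': "binomials u' \<subseteq> gen_ideal S"
  shows "binomials (\<lambda>j. u j + u' j) \<subseteq> gen_ideal S"
proof
  fix p assume "p \<in> binomials (\<lambda>j. u j + u' j)"
  then obtain a b where p: "p = monom a - monom b" and ab: "expvec a b = (\<lambda>j. u j + u' j)"
    unfolding binomials_def by blast
  obtain N a' b' m where shift_a: "expvec a' a = (\<lambda>j. int N * P j)"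
    and shift_b: "expvec b' b = (\<lambda>j. int N * P j)"
    and "expvec a' m = u" "expvec m b' = u'"
    using expvec_split_by_shift[OF P ab] .
  have shift: "binomials (\<lambda>j. int N * P j) \<subseteq> gen_ideal S"
    by (rule binomials_multiple_subset) fact
  have "monom a' - monom a \<in> gen_ideal S"
    using shift_a by (rule subsetD[OF shift binomial_in_binomials])
  moreover have "monom b' - monom b \<in> gen_ideal S"
    using shift_b by (rule subsetD[OF shift binomial_in_binomials])
  moreover have "monom a' - monom m \<in> gen_ideal S"
    using \<open>expvec a' m = u\<close> by (rule subsetD[OF u binomial_in_binomials])
  moreover have "monom m - monom b' \<in> gen_ideal S"
    using \<open>expvec m b' = u'\<close> by (rule subsetD[OF u' binomial_in_binomials])
  moreover have "p = (monom a' - monom m) + (monom m - monom b') + (monom b' - monom b) - (monom a' - monom a)"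
    unfolding p by (simp add: algebra_simps)
  ultimately show "p \<in> gen_ideal S"
    by (metis gen_ideal_add gen_ideal_diff)
qed

theorem gen_ideal_canon_binomials:
  assumes "i0 < k" and pos: "\<And>j. v i0 j > 0"
  shows "gen_ideal ((\<lambda>i. canon_binomial (v i)) ` {..<k}) = lattice_ideal (lattice_span k v)"
proof (rule gen_ideal_eq_lattice_ideal)
  let ?G = "(\<lambda>i. canon_binomial (v i)) ` {..<k}"
  show "\<exists>u\<in>lattice_span k v. g \<in> binomials u" if "g \<in> ?G" for g
    using that canon_binomial_in_binomials generator_in_lattice_span by blast
  have gen: "canon_binomial (v i) \<in> gen_ideal ?G" if "i < k" for i
    using that by (simp add: gen_ideal_base)
  have "binomials (\<lambda>j. \<Sum>i<l. c i * v i j) \<subseteq> gen_ideal ?G" if "l \<le> k" for l c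
    using that
  proof (induction l)
    case 0
    show ?case
      using binomials_multiple_subset[OF gen[OF \<open>i0 < k\<close>], of 0] by simp
  next
    case (Suc l)
    then have "binomials (\<lambda>j. \<Sum>i<l. c i * v i j) \<subseteq> gen_ideal ?G"
      and "binomials (\<lambda>j. c l * v l j) \<subseteq> gen_ideal ?G"
      using binomials_multiple_subset[OF gen] by simp_all
    then show ?case
      using binomials_add_subset[OF pos gen[OF \<open>i0 < k\<close>]] by simp
  qed
  then show "binomials u \<subseteq> gen_ideal ?G" if "u \<in> lattice_span k v" for u
    using that unfolding lattice_span_def by blast
qed

theorem proposition5p5:
  fixes v :: "'n::finite \<Rightarrow> int"
    and k :: nat and \<alpha> \<beta> :: "nat \<Rightarrow> ('n::finite \<Rightarrow> nat)"
  shows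
   "(let p = canon_binomial v; L = lattice_span 1 (\<lambda>_. v) in
       gen_ideal {p} = lattice_ideal L \<and>
       (Factorial_Ring.irreducible p \<longrightarrow> gen_ideal {p} = lattice_ideal (Sat L)))
    \<and>
    ((\<exists>i<k. \<forall>j. expvec (\<alpha> i) (\<beta> i) j > 0) \<longrightarrow>
       gen_ideal ((\<lambda>i. canon_binomial (expvec (\<alpha> i) (\<beta> i))) ` {..<k})
         = lattice_ideal (lattice_span k (\<lambda>i. expvec (\<alpha> i) (\<beta> i))))"
  unfolding Let_def
proof (intro conjI impI)
  show "gen_ideal {canon_binomial v} = lattice_ideal (lattice_span 1 (\<lambda>_. v))"
    by (rule gen_ideal_canon_binomial)
  show "gen_ideal {canon_binomial v} = lattice_ideal (Sat (lattice_span 1 (\<lambda>_. v)))"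
    if "Factorial_Ring.irreducible (canon_binomial v)"
    using that by (rule gen_ideal_irreducible_canon_binomial)
  assume "\<exists>i<k. \<forall>j. expvec (\<alpha> i) (\<beta> i) j > 0"
  then obtain i0 where "i0 < k" "\<And>j. expvec (\<alpha> i0) (\<beta> i0) j > 0"
    by blast
  then show "gen_ideal ((\<lambda>i. canon_binomial (expvec (\<alpha> i) (\<beta> i))) ` {..<k})
      = lattice_ideal (lattice_span k (\<lambda>i. expvec (\<alpha> i) (\<beta> i)))"
    by (rule gen_ideal_canon_binomials)
qed

end
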